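(* Let $\mathcal{L}=(n,\mathcal{M},\mathcal{C})$ be a simple linearization. If $G(D(\mathcal{L}))$ is acyclic, then the system $0\le y_m\le1$ ($m\in\mathcal{M}$), $y_{\bigcup c}\le y_m$ ($c\in\mathcal{C}$, $m\in c$), $\sum_{m\in c}y_m\le y_{\bigcup c}+|c|-1$ ($c\in\mathcal{C}$) is totally dual integral.
   Context: $[n]=\{1,\dots,n\}$; a monomial is a nonempty subset of $[n]$; $\mathcal{S}=\{\{i\}:i\in[n]\}$. A linearization is a triple $\mathcal{L}=(n,\mathcal{M},\mathcal{C})$, where $\mathcal{M}$ is a set of monomials with $\mathcal{S}\subseteq\mathcal{M}$ and $\mathcal{C}$ is a set of AND-constraints; each AND-constraint is a set $c\subseteq\mathcal{M}$ whose union $\bigcup c$ (resultant) lies in $\mathcal{M}$. $\mathcal{P}=\mathcal{M}\setminus\mathcal{S}$. Linearizations are consistent: each $m\in\mathcal{P}$ is the resultant of some $c$ with $|m'|<|m|$ for all $m'\in c$. $\mathcal{L}$ is simple if each proper monomial is the resultant of exactly one AND-constraint and $|\mathcal{C}|=|\mathcal{P}|$. $D(\mathcal{L})$ has node set $\mathcal{M}$ and, for each $c\in\mathcal{C}$, arcs from $\bigcup c$ to each $m\in c$; $G(D(\mathcal{L}))$ is its underlying undirected graph. Total dual integrality: for every integral objective with finite LP maximum, the dual has an integral optimal solution. *)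

theory Defs
  imports Complex_Main
begin

definition monomial :: "nat \<Rightarrow> nat set \<Rightarrow> bool" where
  "monomial n m \<longleftrightarrow> m \<noteq> {} \<and> m \<subseteq> {1..n}"

definition singletons :: "nat \<Rightarrow> nat set set" where
  "singletons n = {{i} | i. i \<in> {1..n}}"

definition proper_monomials :: "nat \<Rightarrow> nat set set \<Rightarrow> nat set set" where
  "proper_monomials n M = M - singletons n"

text \<open>An AND-constraint is a set c of monomials of M whose union (resultant) lies in M.\<close>
definition linearization :: "nat \<Rightarrow> nat set set \<Rightarrow> nat set set set \<Rightarrow> bool" where
  "linearization n M C \<longleftrightarrow>
     (\<forall>m\<in>M. monomial n m) \<and> singletons n \<subseteq> M \<and>
     (\<forall>c\<in>C. c \<subseteq> M \<and> \<Union>c \<in> M) \<and>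
     (\<forall>m\<in>proper_monomials n M. \<exists>c\<in>C. \<Union>c = m \<and> (\<forall>m'\<in>c. card m' < card m))"

definition simple_linearization :: "nat \<Rightarrow> nat set set \<Rightarrow> nat set set set \<Rightarrow> bool" where
  "simple_linearization n M C \<longleftrightarrow>
     linearization n M C \<and>
     (\<forall>m\<in>proper_monomials n M. \<exists>!c. c \<in> C \<and> \<Union>c = m) \<and>
     card C = card (proper_monomials n M)"

definition D_arcs :: "nat set set set \<Rightarrow> (nat set \<times> nat set) set" where
  "D_arcs C = {(\<Union>c, m) | c m. c \<in> C \<and> m \<in> c}"

definition G_edges :: "nat set set set \<Rightarrow> nat set set set" where
  "G_edges C = {{u, v} | u v. (u, v) \<in> D_arcs C}"

definition is_cycle :: "'a set \<Rightarrow> 'a set set \<Rightarrow> 'a list \<Rightarrow> bool" where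
  "is_cycle V E vs \<longleftrightarrow>
     length vs \<ge> 3 \<and> distinct vs \<and> set vs \<subseteq> V \<and>
     (\<forall>i < length vs. {vs ! i, vs ! ((i + 1) mod length vs)} \<in> E)"

definition acyclic_graph :: "'a set \<Rightarrow> 'a set set \<Rightarrow> bool" where
  "acyclic_graph V E \<longleftrightarrow> (\<nexists>vs. is_cycle V E vs)"

text \<open>Rows indexed by R, variables indexed by V.\<close>
definition primal_feasible ::
  "'r set \<Rightarrow> 'v set \<Rightarrow> ('r \<Rightarrow> 'v \<Rightarrow> real) \<Rightarrow> ('r \<Rightarrow> real) \<Rightarrow> ('v \<Rightarrow> real) \<Rightarrow> bool" where
  "primal_feasible R V A b y \<longleftrightarrow> (\<forall>r\<in>R. (\<Sum>v\<in>V. A r v * y v) \<le> b r)"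

definition lp_has_finite_max ::
  "'r set \<Rightarrow> 'v set \<Rightarrow> ('r \<Rightarrow> 'v \<Rightarrow> real) \<Rightarrow> ('r \<Rightarrow> real) \<Rightarrow> ('v \<Rightarrow> real) \<Rightarrow> bool" where
  "lp_has_finite_max R V A b w \<longleftrightarrow>
     (\<exists>y. primal_feasible R V A b y \<and>
          (\<forall>y'. primal_feasible R V A b y' \<longrightarrow> (\<Sum>v\<in>V. w v * y' v) \<le> (\<Sum>v\<in>V. w v * y v)))"

definition dual_feasible ::
  "'r set \<Rightarrow> 'v set \<Rightarrow> ('r \<Rightarrow> 'v \<Rightarrow> real) \<Rightarrow> ('v \<Rightarrow> real) \<Rightarrow> ('r \<Rightarrow> real) \<Rightarrow> bool" where
  "dual_feasible R V A w u \<longleftrightarrow>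
     (\<forall>r\<in>R. u r \<ge> 0) \<and> (\<forall>v\<in>V. (\<Sum>r\<in>R. u r * A r v) = w v)"

definition dual_optimal ::
  "'r set \<Rightarrow> 'v set \<Rightarrow> ('r \<Rightarrow> 'v \<Rightarrow> real) \<Rightarrow> ('r \<Rightarrow> real) \<Rightarrow> ('v \<Rightarrow> real) \<Rightarrow> ('r \<Rightarrow> real) \<Rightarrow> bool" where
  "dual_optimal R V A b w u \<longleftrightarrow>
     dual_feasible R V A w u \<and>
     (\<forall>u'. dual_feasible R V A w u' \<longrightarrow> (\<Sum>r\<in>R. b r * u r) \<le> (\<Sum>r\<in>R. b r * u' r))"

definition TDI ::
  "'r set \<Rightarrow> 'v set \<Rightarrow> ('r \<Rightarrow> 'v \<Rightarrow> real) \<Rightarrow> ('r \<Rightarrow> real) \<Rightarrow> bool" where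
  "TDI R V A b \<longleftrightarrow>
     (\<forall>w :: 'v \<Rightarrow> int. lp_has_finite_max R V A b (\<lambda>v. of_int (w v)) \<longrightarrow>
        (\<exists>u. dual_optimal R V A b (\<lambda>v. of_int (w v)) u \<and> (\<forall>r\<in>R. u r \<in> \<int>)))"

datatype row =
    Lower "nat set"                 \<comment> \<open>-y_m \<le> 0\<close>
  | Upper "nat set"                 \<comment> \<open>y_m \<le> 1\<close>
  | Link "nat set set" "nat set"    \<comment> \<open>y_{\<Union>c} - y_m \<le> 0\<close>
  | AndRow "nat set set"            \<comment> \<open>\<Sum>_{m\<in>c} y_m - y_{\<Union>c} \<le> |c| - 1\<close>

definition lin_rows :: "nat set set \<Rightarrow> nat set set set \<Rightarrow> row set" where
  "lin_rows M C = Lower ` M \<union> Upper ` M \<union> {Link c m | c m. c \<in> C \<and> m \<in> c} \<union> AndRow ` C"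

fun lin_A :: "row \<Rightarrow> nat set \<Rightarrow> real" where
  "lin_A (Lower m) v = (if v = m then -1 else 0)"
| "lin_A (Upper m) v = (if v = m then 1 else 0)"
| "lin_A (Link c m) v = (if v = \<Union>c then 1 else 0) - (if v = m then 1 else 0)"
| "lin_A (AndRow c) v = (if v \<in> c then 1 else 0) - (if v = \<Union>c then 1 else 0)"

fun lin_b :: "row \<Rightarrow> real" where
  "lin_b (Lower m) = 0"
| "lin_b (Upper m) = 1"
| "lin_b (Link c m) = 0"
| "lin_b (AndRow c) = real (card c) - 1"

end

theory Submission
  imports Defs
begin

(*
  Call a system binary strongly dual if every integral objective has a 0/1 primal solution and an
  integral dual solution of the same value; by weak duality such a system is TDI.  This property
  survives gluing two systems along a single shared variable v whose two values are feasible in the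
  first one: charge v the integral amount d by which the optimum of the first system on the
  remaining variables changes when v is switched on, solve the second system with the weight of v
  raised by d, and complete its solution by an optimal solution of the first system with the same
  value at v.  A system of bounds alone, and a single AND-constraint with its bounds (a star
  centred at the resultant), are binary strongly dual by explicit certificates.  In a simple
  linearization the resultants are distinct and strictly larger than their members, so when
  G(D(L)) is a forest the end of a longest path exhibits a star meeting all other stars in at most
  one vertex; the system is thus built by gluing stars one at a time.
*)

section \<open>Binary strong duality\<close>

lemma weak_duality:
  assumes "finite R" "finite V" "primal_feasible R V A b y" "dual_feasible R V A w u"
  shows "(\<Sum>v\<in>V. w v * y v) \<le> (\<Sum>r\<in>R. b r * u r)"
proof -
  have "(\<Sum>v\<in>V. w v * y v) = (\<Sum>v\<in>V. (\<Sum>r\<in>R. u r * A r v) * y v)"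
    using assms(4) unfolding dual_feasible_def by simp
  also have "\<dots> = (\<Sum>r\<in>R. u r * (\<Sum>v\<in>V. A r v * y v))"
    by (simp add: sum_distrib_left sum_distrib_right sum.swap[of _ V R] mult.assoc)
  also have "\<dots> \<le> (\<Sum>r\<in>R. u r * b r)"
    using assms(3,4) unfolding primal_feasible_def dual_feasible_def
    by (intro sum_mono mult_left_mono) auto
  finally show ?thesis
    by (simp add: mult.commute)
qed

definition duality_certificate ::
  "'r set \<Rightarrow> 'v set \<Rightarrow> ('r \<Rightarrow> 'v \<Rightarrow> real) \<Rightarrow> ('r \<Rightarrow> real) \<Rightarrow> ('v \<Rightarrow> real) \<Rightarrow> ('v \<Rightarrow> real) \<Rightarrow>
    ('r \<Rightarrow> real) \<Rightarrow> bool" where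
  "duality_certificate R V A b w y u \<longleftrightarrow>
     primal_feasible R V A b y \<and> dual_feasible R V A w u \<and> (\<Sum>x\<in>V. w x * y x) = (\<Sum>r\<in>R. b r * u r)"

definition binary_certified ::
  "'r set \<Rightarrow> 'v set \<Rightarrow> ('r \<Rightarrow> 'v \<Rightarrow> real) \<Rightarrow> ('r \<Rightarrow> real) \<Rightarrow> ('v \<Rightarrow> int) \<Rightarrow> bool" where
  "binary_certified R V A b w \<longleftrightarrow>
     (\<exists>y u. (\<forall>x\<in>V. y x \<in> {0, 1}) \<and> (\<forall>r\<in>R. u r \<in> \<int>) \<and>
        duality_certificate R V A b (\<lambda>x. of_int (w x)) y u)"

definition binary_strong_duality ::
  "'r set \<Rightarrow> 'v set \<Rightarrow> ('r \<Rightarrow> 'v \<Rightarrow> real) \<Rightarrow> ('r \<Rightarrow> real) \<Rightarrow> bool" where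
  "binary_strong_duality R V A b \<longleftrightarrow> (\<forall>w. binary_certified R V A b w)"

lemma TDI_if_binary_strong_duality:
  fixes A :: "'r \<Rightarrow> 'v \<Rightarrow> real"
  assumes "finite R" "finite V" "binary_strong_duality R V A b"
  shows "TDI R V A b"
  unfolding TDI_def
proof (intro allI impI)
  fix w :: "'v \<Rightarrow> int"
  obtain y u where u: "\<forall>r\<in>R. u r \<in> \<int>"
    and cert: "duality_certificate R V A b (\<lambda>x. of_int (w x)) y u"
    using assms(3) unfolding binary_strong_duality_def binary_certified_def by blast
  have "dual_optimal R V A b (\<lambda>x. of_int (w x)) u"
    unfolding dual_optimal_def
  proof (intro conjI allI impI)
    fix u' assume "dual_feasible R V A (\<lambda>x. of_int (w x)) u'"
    with weak_duality[OF assms(1,2)] cert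
    show "(\<Sum>r\<in>R. b r * u r) \<le> (\<Sum>r\<in>R. b r * u' r)"
      unfolding duality_certificate_def by metis
  qed (use cert in \<open>simp add: duality_certificate_def\<close>)
  with u show "\<exists>u. dual_optimal R V A b (\<lambda>x. of_int (w x)) u \<and> (\<forall>r\<in>R. u r \<in> \<int>)"
    by blast
qed

lemma binary_maximizer_exists:
  fixes w :: "'v \<Rightarrow> real"
  assumes "finite V" "P y\<^sub>0" "\<And>y. P y \<Longrightarrow> \<forall>x\<in>V. y x \<in> {0, 1}"
  shows "\<exists>y. P y \<and> (\<forall>y'. P y' \<longrightarrow> (\<Sum>x\<in>V. w x * y' x) \<le> (\<Sum>x\<in>V. w x * y x))"
proof -
  let ?val = "\<lambda>y. \<Sum>x\<in>V. w x * y x"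
  have "?val y = sum w {x\<in>V. y x = 1}" if "P y" for y
    using assms(1) assms(3)[OF that] by (auto simp: sum.inter_filter intro!: sum.cong)
  then have "?val ` Collect P \<subseteq> sum w ` Pow V"
    by auto
  then have fin: "finite (?val ` Collect P)"
    by (rule finite_subset) (simp add: assms(1))
  have "Max (?val ` Collect P) \<in> ?val ` Collect P"
    using fin assms(2) by (intro Max_in) auto
  then obtain y where "P y" "?val y = Max (?val ` Collect P)"
    by auto
  moreover have "?val y' \<le> Max (?val ` Collect P)" if "P y'" for y'
    using fin that by (intro Max_ge) auto
  ultimately show ?thesis
    by auto
qed

lemma binary_strong_duality_indifference_price:
  fixes A :: "'r \<Rightarrow> 'v \<Rightarrow> real" and w :: "'v \<Rightarrow> int"
  assumes fin: "finite R" "finite V" and v: "v \<in> V"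
    and zero: "primal_feasible R V A b (\<lambda>_. 0)" and one: "primal_feasible R V A b (\<lambda>_. 1)"
    and bsd: "binary_strong_duality R V A b"
  obtains d u where "\<forall>r\<in>R. u r \<in> \<int>"
    and "\<And>t. t \<in> {0, 1} \<Longrightarrow> \<exists>y. (\<forall>x\<in>V. y x \<in> {0, 1}) \<and> y v = t \<and>
      duality_certificate R V A b (\<lambda>x. of_int ((w(v := - d)) x)) y u"
proof -
  define slice where "slice t y \<longleftrightarrow> (\<forall>x\<in>V. y x \<in> {0, 1}) \<and> primal_feasible R V A b y \<and> y v = t"
    for t and y :: "'v \<Rightarrow> real"
  define val where "val y = (\<Sum>x\<in>V - {v}. of_int (w x) * y x)" for y :: "'v \<Rightarrow> real"
  have "\<exists>y. slice t y \<and> (\<forall>y'. slice t y' \<longrightarrow> val y' \<le> val y)" if "t \<in> {0, 1}" for t :: real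
    unfolding val_def
    by (rule binary_maximizer_exists[of _ _ "\<lambda>_. t"]) (use fin zero one that in \<open>auto simp: slice_def\<close>)
  then obtain y\<^sub>0 y\<^sub>1 where y\<^sub>0: "slice 0 y\<^sub>0" "\<And>y. slice 0 y \<Longrightarrow> val y \<le> val y\<^sub>0"
    and y\<^sub>1: "slice 1 y\<^sub>1" "\<And>y. slice 1 y \<Longrightarrow> val y \<le> val y\<^sub>1"
    by (metis insertCI)
  have "val y\<^sub>1 - val y\<^sub>0 \<in> \<int>"
    using y\<^sub>0(1) y\<^sub>1(1) unfolding val_def slice_def
    by (intro Ints_diff Ints_sum Ints_mult) auto
  \<comment> \<open>With weight \<open>-d\<close> on \<open>v\<close> both values of \<open>v\<close> are optimal.\<close>
  then obtain d where d: "of_int d = val y\<^sub>1 - val y\<^sub>0"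
    by (metis Ints_cases)
  let ?w = "\<lambda>x. of_int ((w(v := - d)) x) :: real"
  obtain y' u where y': "\<forall>x\<in>V. y' x \<in> {0, 1}" and u: "\<forall>r\<in>R. u r \<in> \<int>"
    and cert: "duality_certificate R V A b ?w y' u"
    using bsd unfolding binary_strong_duality_def binary_certified_def by blast
  have val_w: "(\<Sum>x\<in>V. ?w x * y x) = - of_int d * y v + val y" for y
  proof -
    have "(\<Sum>x\<in>V - {v}. ?w x * y x) = val y"
      unfolding val_def by (rule sum.cong) auto
    then show ?thesis
      unfolding sum.remove[OF fin(2) v] by simp
  qed
  have "slice (y' v) y'" "y' v \<in> {0, 1}"
    using y' v cert unfolding slice_def duality_certificate_def by auto
  moreover have "(\<Sum>r\<in>R. b r * u r) = - of_int d * y' v + val y'"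
    using cert unfolding duality_certificate_def val_w by simp
  ultimately have "(\<Sum>r\<in>R. b r * u r) \<le> val y\<^sub>0"
    using y\<^sub>0(2) y\<^sub>1(2) d by auto
  moreover have "val y\<^sub>0 \<le> (\<Sum>r\<in>R. b r * u r)"
    using weak_duality[OF fin, of A b y\<^sub>0 ?w u] y\<^sub>0(1) cert
    unfolding val_w slice_def duality_certificate_def by simp
  ultimately have "duality_certificate R V A b ?w y u" if "slice t y" "- of_int d * t + val y = val y\<^sub>0" for t y
    using that cert unfolding duality_certificate_def slice_def val_w by auto
  then have "duality_certificate R V A b ?w y\<^sub>0 u" "duality_certificate R V A b ?w y\<^sub>1 u"
    using y\<^sub>0(1) y\<^sub>1(1) d by auto
  with y\<^sub>0(1) y\<^sub>1(1) u show thesis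
    by (intro that[of u d]) (auto simp: slice_def)
qed

lemma sum_zero_extensions_Un:
  fixes u\<^sub>1 u\<^sub>2 g :: "'r \<Rightarrow> real"
  assumes "finite R\<^sub>1" "finite R\<^sub>2"
  shows "(\<Sum>r\<in>R\<^sub>1 \<union> R\<^sub>2. ((if r \<in> R\<^sub>1 then u\<^sub>1 r else 0) + (if r \<in> R\<^sub>2 then u\<^sub>2 r else 0)) * g r)
    = (\<Sum>r\<in>R\<^sub>1. u\<^sub>1 r * g r) + (\<Sum>r\<in>R\<^sub>2. u\<^sub>2 r * g r)"
proof -
  have "(\<Sum>r\<in>R\<^sub>1 \<union> R\<^sub>2. (if r \<in> R\<^sub>i then u r else 0) * g r) = (\<Sum>r\<in>R\<^sub>i. u r * g r)"
    if "R\<^sub>i \<subseteq> R\<^sub>1 \<union> R\<^sub>2" for R\<^sub>i and u :: "'r \<Rightarrow> real"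
  proof -
    have "(\<Sum>r\<in>R\<^sub>1 \<union> R\<^sub>2. (if r \<in> R\<^sub>i then u r else 0) * g r)
        = (\<Sum>r\<in>R\<^sub>1 \<union> R\<^sub>2. if r \<in> R\<^sub>i then u r * g r else 0)"
      by (rule sum.cong) auto
    also have "\<dots> = (\<Sum>r\<in>(R\<^sub>1 \<union> R\<^sub>2) \<inter> R\<^sub>i. u r * g r)"
      using assms by (simp add: sum.inter_restrict)
    finally show ?thesis
      using that by (simp add: Int_absorb1)
  qed
  then show ?thesis
    by (simp add: distrib_right sum.distrib)
qed

lemma objective_glue:
  fixes w\<^sub>1 w\<^sub>2 y\<^sub>1 y\<^sub>2 :: "'v \<Rightarrow> real"
  assumes "finite V\<^sub>1" "finite V\<^sub>2" "V\<^sub>1 \<inter> V\<^sub>2 = {v}" "y\<^sub>1 v = y\<^sub>2 v"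
  shows "(\<Sum>x\<in>V\<^sub>1 \<union> V\<^sub>2. ((if x \<in> V\<^sub>1 then w\<^sub>1 x else 0) + (if x \<in> V\<^sub>2 then w\<^sub>2 x else 0)) *
      (if x \<in> V\<^sub>1 then y\<^sub>1 x else y\<^sub>2 x)) = (\<Sum>x\<in>V\<^sub>1. w\<^sub>1 x * y\<^sub>1 x) + (\<Sum>x\<in>V\<^sub>2. w\<^sub>2 x * y\<^sub>2 x)"
proof -
  have "(\<Sum>x\<in>V\<^sub>1 \<union> V\<^sub>2. ((if x \<in> V\<^sub>1 then w\<^sub>1 x else 0) + (if x \<in> V\<^sub>2 then w\<^sub>2 x else 0)) *
      (if x \<in> V\<^sub>1 then y\<^sub>1 x else y\<^sub>2 x))
    = (\<Sum>x\<in>V\<^sub>1 \<union> V\<^sub>2. ((if x \<in> V\<^sub>1 then w\<^sub>1 x * y\<^sub>1 x else 0) + (if x \<in> V\<^sub>2 then w\<^sub>2 x * y\<^sub>2 x else 0)) * 1)"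
  proof (rule sum.cong)
    fix x assume "x \<in> V\<^sub>1 \<union> V\<^sub>2"
    show "((if x \<in> V\<^sub>1 then w\<^sub>1 x else 0) + (if x \<in> V\<^sub>2 then w\<^sub>2 x else 0)) *
        (if x \<in> V\<^sub>1 then y\<^sub>1 x else y\<^sub>2 x)
      = ((if x \<in> V\<^sub>1 then w\<^sub>1 x * y\<^sub>1 x else 0) + (if x \<in> V\<^sub>2 then w\<^sub>2 x * y\<^sub>2 x else 0)) * 1"
      using assms(3,4) by (cases "x = v") (auto simp: distrib_right)
  qed simp
  also have "\<dots> = (\<Sum>x\<in>V\<^sub>1. w\<^sub>1 x * y\<^sub>1 x * 1) + (\<Sum>x\<in>V\<^sub>2. w\<^sub>2 x * y\<^sub>2 x * 1)"
    by (rule sum_zero_extensions_Un[OF assms(1,2)])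
  finally show ?thesis
    by simp
qed

lemma primal_feasible_glue:
  assumes "finite V\<^sub>1" "finite V\<^sub>2" "V\<^sub>1 \<inter> V\<^sub>2 = {v}"
    and "\<And>r x. r \<in> R\<^sub>1 \<Longrightarrow> x \<notin> V\<^sub>1 \<Longrightarrow> A r x = 0"
    and "\<And>r x. r \<in> R\<^sub>2 \<Longrightarrow> x \<notin> V\<^sub>2 \<Longrightarrow> A r x = 0"
    and "primal_feasible R\<^sub>1 V\<^sub>1 A b y\<^sub>1" "primal_feasible R\<^sub>2 V\<^sub>2 A b y\<^sub>2" "y\<^sub>1 v = y\<^sub>2 v"
  shows "primal_feasible (R\<^sub>1 \<union> R\<^sub>2) (V\<^sub>1 \<union> V\<^sub>2) A b (\<lambda>x. if x \<in> V\<^sub>1 then y\<^sub>1 x else y\<^sub>2 x)"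
  unfolding primal_feasible_def
proof
  let ?y = "\<lambda>x. if x \<in> V\<^sub>1 then y\<^sub>1 x else y\<^sub>2 x"
  fix r assume "r \<in> R\<^sub>1 \<union> R\<^sub>2"
  then consider "r \<in> R\<^sub>1" | "r \<in> R\<^sub>2"
    by blast
  then show "(\<Sum>x\<in>V\<^sub>1 \<union> V\<^sub>2. A r x * ?y x) \<le> b r"
  proof cases
    case 1
    then have "(\<Sum>x\<in>V\<^sub>1 \<union> V\<^sub>2. A r x * ?y x) = (\<Sum>x\<in>V\<^sub>1. A r x * y\<^sub>1 x)"
      using assms(1,2,4) by (subst sum.mono_neutral_right[of _ V\<^sub>1]) auto
    then show ?thesis
      using 1 assms(6) unfolding primal_feasible_def by simp
  next
    case 2
    have "?y x = y\<^sub>2 x" if "x \<in> V\<^sub>2" for x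
      using that assms(3,8) by auto
    then have "(\<Sum>x\<in>V\<^sub>1 \<union> V\<^sub>2. A r x * ?y x) = (\<Sum>x\<in>V\<^sub>2. A r x * y\<^sub>2 x)"
      using 2 assms(1,2,5) by (subst sum.mono_neutral_right[of _ V\<^sub>2]) auto
    then show ?thesis
      using 2 assms(7) unfolding primal_feasible_def by simp
  qed
qed

lemma dual_feasible_glue:
  assumes "finite R\<^sub>1" "finite R\<^sub>2"
    and "\<And>r x. r \<in> R\<^sub>1 \<Longrightarrow> x \<notin> V\<^sub>1 \<Longrightarrow> A r x = 0"
    and "\<And>r x. r \<in> R\<^sub>2 \<Longrightarrow> x \<notin> V\<^sub>2 \<Longrightarrow> A r x = 0"
    and "dual_feasible R\<^sub>1 V\<^sub>1 A w\<^sub>1 u\<^sub>1" "dual_feasible R\<^sub>2 V\<^sub>2 A w\<^sub>2 u\<^sub>2"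
  shows "dual_feasible (R\<^sub>1 \<union> R\<^sub>2) (V\<^sub>1 \<union> V\<^sub>2) A
    (\<lambda>x. (if x \<in> V\<^sub>1 then w\<^sub>1 x else 0) + (if x \<in> V\<^sub>2 then w\<^sub>2 x else 0))
    (\<lambda>r. (if r \<in> R\<^sub>1 then u\<^sub>1 r else 0) + (if r \<in> R\<^sub>2 then u\<^sub>2 r else 0))"
  unfolding dual_feasible_def
proof (intro conjI ballI)
  fix x
  have "(\<Sum>r\<in>R\<^sub>i. u r * A r x) = (if x \<in> V\<^sub>i then w x else 0)"
    if "dual_feasible R\<^sub>i V\<^sub>i A w u" "\<And>r. r \<in> R\<^sub>i \<Longrightarrow> x \<notin> V\<^sub>i \<Longrightarrow> A r x = 0"
    for R\<^sub>i V\<^sub>i w u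
    using that unfolding dual_feasible_def by auto
  from this[OF assms(5)] this[OF assms(6)] assms(3,4)
  show "(\<Sum>r\<in>R\<^sub>1 \<union> R\<^sub>2. ((if r \<in> R\<^sub>1 then u\<^sub>1 r else 0) + (if r \<in> R\<^sub>2 then u\<^sub>2 r else 0)) * A r x)
    = (if x \<in> V\<^sub>1 then w\<^sub>1 x else 0) + (if x \<in> V\<^sub>2 then w\<^sub>2 x else 0)"
    by (simp add: sum_zero_extensions_Un[OF assms(1,2)])
qed (use assms(5,6) in \<open>auto simp: dual_feasible_def\<close>)

lemma duality_certificate_glue:
  assumes fin: "finite R\<^sub>1" "finite R\<^sub>2" "finite V\<^sub>1" "finite V\<^sub>2"
    and V\<^sub>1\<^sub>2: "V\<^sub>1 \<inter> V\<^sub>2 = {v}"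
    and supp\<^sub>1: "\<And>r x. r \<in> R\<^sub>1 \<Longrightarrow> x \<notin> V\<^sub>1 \<Longrightarrow> A r x = 0"
    and supp\<^sub>2: "\<And>r x. r \<in> R\<^sub>2 \<Longrightarrow> x \<notin> V\<^sub>2 \<Longrightarrow> A r x = 0"
    and cert\<^sub>1: "duality_certificate R\<^sub>1 V\<^sub>1 A b w\<^sub>1 y\<^sub>1 u\<^sub>1"
    and cert\<^sub>2: "duality_certificate R\<^sub>2 V\<^sub>2 A b w\<^sub>2 y\<^sub>2 u\<^sub>2"
    and agree: "y\<^sub>1 v = y\<^sub>2 v"
  shows "duality_certificate (R\<^sub>1 \<union> R\<^sub>2) (V\<^sub>1 \<union> V\<^sub>2) A b
    (\<lambda>x. (if x \<in> V\<^sub>1 then w\<^sub>1 x else 0) + (if x \<in> V\<^sub>2 then w\<^sub>2 x else 0))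
    (\<lambda>x. if x \<in> V\<^sub>1 then y\<^sub>1 x else y\<^sub>2 x)
    (\<lambda>r. (if r \<in> R\<^sub>1 then u\<^sub>1 r else 0) + (if r \<in> R\<^sub>2 then u\<^sub>2 r else 0))"
  unfolding duality_certificate_def
proof (intro conjI)
  show "primal_feasible (R\<^sub>1 \<union> R\<^sub>2) (V\<^sub>1 \<union> V\<^sub>2) A b (\<lambda>x. if x \<in> V\<^sub>1 then y\<^sub>1 x else y\<^sub>2 x)"
    by (rule primal_feasible_glue[of V\<^sub>1 V\<^sub>2 v R\<^sub>1 A R\<^sub>2 b y\<^sub>1 y\<^sub>2])
      (use fin V\<^sub>1\<^sub>2 supp\<^sub>1 supp\<^sub>2 cert\<^sub>1 cert\<^sub>2 agree in \<open>auto simp: duality_certificate_def\<close>)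
  show "dual_feasible (R\<^sub>1 \<union> R\<^sub>2) (V\<^sub>1 \<union> V\<^sub>2) A
    (\<lambda>x. (if x \<in> V\<^sub>1 then w\<^sub>1 x else 0) + (if x \<in> V\<^sub>2 then w\<^sub>2 x else 0))
    (\<lambda>r. (if r \<in> R\<^sub>1 then u\<^sub>1 r else 0) + (if r \<in> R\<^sub>2 then u\<^sub>2 r else 0))"
    by (rule dual_feasible_glue[of R\<^sub>1 R\<^sub>2 V\<^sub>1 A V\<^sub>2])
      (use fin supp\<^sub>1 supp\<^sub>2 cert\<^sub>1 cert\<^sub>2 in \<open>auto simp: duality_certificate_def\<close>)
  show "(\<Sum>x\<in>V\<^sub>1 \<union> V\<^sub>2. ((if x \<in> V\<^sub>1 then w\<^sub>1 x else 0) + (if x \<in> V\<^sub>2 then w\<^sub>2 x else 0)) *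
      (if x \<in> V\<^sub>1 then y\<^sub>1 x else y\<^sub>2 x))
    = (\<Sum>r\<in>R\<^sub>1 \<union> R\<^sub>2. b r * ((if r \<in> R\<^sub>1 then u\<^sub>1 r else 0) + (if r \<in> R\<^sub>2 then u\<^sub>2 r else 0)))"
    using cert\<^sub>1 cert\<^sub>2 objective_glue[where y\<^sub>1 = y\<^sub>1 and y\<^sub>2 = y\<^sub>2, OF fin(3,4) V\<^sub>1\<^sub>2 agree]
      sum_zero_extensions_Un[OF fin(1,2), of u\<^sub>1 u\<^sub>2 b]
    unfolding duality_certificate_def by (simp add: mult.commute)
qed

lemma duality_certificate_cong:
  assumes "duality_certificate R V A b w y u" "\<And>x. x \<in> V \<Longrightarrow> w x = w' x"
  shows "duality_certificate R V A b w' y u"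
  using assms unfolding duality_certificate_def dual_feasible_def by (simp cong: sum.cong)

lemma binary_strong_duality_glue:
  fixes A :: "'r \<Rightarrow> 'v \<Rightarrow> real"
  assumes fin: "finite R\<^sub>1" "finite R\<^sub>2" "finite V\<^sub>1" "finite V\<^sub>2"
    and V\<^sub>1\<^sub>2: "V\<^sub>1 \<inter> V\<^sub>2 = {v}"
    and supp\<^sub>1: "\<And>r x. r \<in> R\<^sub>1 \<Longrightarrow> x \<notin> V\<^sub>1 \<Longrightarrow> A r x = 0"
    and supp\<^sub>2: "\<And>r x. r \<in> R\<^sub>2 \<Longrightarrow> x \<notin> V\<^sub>2 \<Longrightarrow> A r x = 0"
    and zero: "primal_feasible R\<^sub>1 V\<^sub>1 A b (\<lambda>_. 0)" and one: "primal_feasible R\<^sub>1 V\<^sub>1 A b (\<lambda>_. 1)"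
    and bsd\<^sub>1: "binary_strong_duality R\<^sub>1 V\<^sub>1 A b" and bsd\<^sub>2: "binary_strong_duality R\<^sub>2 V\<^sub>2 A b"
  shows "binary_strong_duality (R\<^sub>1 \<union> R\<^sub>2) (V\<^sub>1 \<union> V\<^sub>2) A b"
  unfolding binary_strong_duality_def
proof
  fix w :: "'v \<Rightarrow> int"
  have v: "v \<in> V\<^sub>1" "v \<in> V\<^sub>2"
    using V\<^sub>1\<^sub>2 by auto
  obtain d u\<^sub>1 where u\<^sub>1: "\<forall>r\<in>R\<^sub>1. u\<^sub>1 r \<in> \<int>" and slices: "\<And>t. t \<in> {0, 1} \<Longrightarrow> \<exists>y. (\<forall>x\<in>V\<^sub>1. y x \<in> {0, 1}) \<and>
      y v = t \<and> duality_certificate R\<^sub>1 V\<^sub>1 A b (\<lambda>x. of_int ((w(v := - d)) x)) y u\<^sub>1"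
    using binary_strong_duality_indifference_price[OF fin(1,3) v(1) zero one bsd\<^sub>1] by metis
  obtain y\<^sub>2 u\<^sub>2 where y\<^sub>2: "\<forall>x\<in>V\<^sub>2. y\<^sub>2 x \<in> {0, 1}" and u\<^sub>2: "\<forall>r\<in>R\<^sub>2. u\<^sub>2 r \<in> \<int>"
    and cert\<^sub>2: "duality_certificate R\<^sub>2 V\<^sub>2 A b (\<lambda>x. of_int ((w(v := w v + d)) x)) y\<^sub>2 u\<^sub>2"
    using bsd\<^sub>2 unfolding binary_strong_duality_def binary_certified_def by blast
  \<comment> \<open>The first system is indifferent to the value of \<open>v\<close>, so it follows the second one.\<close>
  obtain y\<^sub>1 where y\<^sub>1: "\<forall>x\<in>V\<^sub>1. y\<^sub>1 x \<in> {0, 1}" "y\<^sub>1 v = y\<^sub>2 v"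
    and cert\<^sub>1: "duality_certificate R\<^sub>1 V\<^sub>1 A b (\<lambda>x. of_int ((w(v := - d)) x)) y\<^sub>1 u\<^sub>1"
    using slices[of "y\<^sub>2 v"] y\<^sub>2 v(2) by blast
  let ?y = "\<lambda>x. if x \<in> V\<^sub>1 then y\<^sub>1 x else y\<^sub>2 x"
  let ?u = "\<lambda>r. (if r \<in> R\<^sub>1 then u\<^sub>1 r else 0) + (if r \<in> R\<^sub>2 then u\<^sub>2 r else 0)"
  have "duality_certificate (R\<^sub>1 \<union> R\<^sub>2) (V\<^sub>1 \<union> V\<^sub>2) A b (\<lambda>x. of_int (w x)) ?y ?u"
  proof (rule duality_certificate_cong)
    show "duality_certificate (R\<^sub>1 \<union> R\<^sub>2) (V\<^sub>1 \<union> V\<^sub>2) A b (\<lambda>x.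
        (if x \<in> V\<^sub>1 then of_int ((w(v := - d)) x) else 0) + (if x \<in> V\<^sub>2 then of_int ((w(v := w v + d)) x) else 0))
      ?y ?u"
      using fin V\<^sub>1\<^sub>2 supp\<^sub>1 supp\<^sub>2 cert\<^sub>1 cert\<^sub>2 y\<^sub>1(2) by (rule duality_certificate_glue)
  qed (use V\<^sub>1\<^sub>2 in auto)
  moreover have "\<forall>x\<in>V\<^sub>1 \<union> V\<^sub>2. ?y x \<in> {0, 1}" "\<forall>r\<in>R\<^sub>1 \<union> R\<^sub>2. ?u r \<in> \<int>"
    using y\<^sub>1(1) y\<^sub>2 u\<^sub>1 u\<^sub>2 by auto
  ultimately show "binary_certified (R\<^sub>1 \<union> R\<^sub>2) (V\<^sub>1 \<union> V\<^sub>2) A b w"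
    unfolding binary_certified_def by (intro exI[of _ ?y] exI[of _ ?u]) blast
qed

section \<open>The linearization system\<close>

definition star :: "nat set set \<Rightarrow> nat set set" where
  "star c = insert (\<Union>c) c"

text \<open>For \<open>V \<subseteq> M\<close> and \<open>K \<subseteq> C\<close>, \<^term>\<open>lin_rows V K\<close> is the subsystem formed by the bounds on \<open>V\<close> and the
  constraints of \<open>K\<close>; it involves only variables of \<open>V\<close> when all stars of \<open>K\<close> lie in \<open>V\<close>.\<close>
definition star_system :: "nat set set \<Rightarrow> nat set set set \<Rightarrow> bool" where
  "star_system V K \<longleftrightarrow> finite V \<and> finite K \<and> (\<forall>c\<in>K. finite c \<and> star c \<subseteq> V)"

lemma lin_rows_Un: "lin_rows (V\<^sub>1 \<union> V\<^sub>2) (K\<^sub>1 \<union> K\<^sub>2) = lin_rows V\<^sub>1 K\<^sub>1 \<union> lin_rows V\<^sub>2 K\<^sub>2"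
  unfolding lin_rows_def image_Un by auto

lemma lin_rows_eq:
  "lin_rows V K = Lower ` V \<union> Upper ` V \<union> (\<lambda>(c, m). Link c m) ` Sigma K (\<lambda>c. c) \<union> AndRow ` K"
  unfolding lin_rows_def by auto

lemma finite_lin_rows: "star_system V K \<Longrightarrow> finite (lin_rows V K)"
  unfolding lin_rows_eq star_system_def by (auto intro!: finite_SigmaI)

lemma lin_A_outside:
  assumes "star_system V K" "r \<in> lin_rows V K" "x \<notin> V"
  shows "lin_A r x = 0"
proof -
  have "\<forall>c\<in>K. x \<noteq> \<Union>c \<and> x \<notin> c"
    using assms(1,3) unfolding star_system_def star_def by blast
  then show ?thesis
    using assms(2,3) unfolding lin_rows_def by (cases r) auto
qed

lemma sum_lin_rows:
  assumes "star_system V K"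
  shows "(\<Sum>r\<in>lin_rows V K. f r) = (\<Sum>x\<in>V. f (Lower x)) + (\<Sum>x\<in>V. f (Upper x))
     + (\<Sum>c\<in>K. \<Sum>m\<in>c. f (Link c m)) + (\<Sum>c\<in>K. f (AndRow c))"
proof -
  have fin: "finite V" "finite K" "finite (Sigma K (\<lambda>c. c))"
    using assms unfolding star_system_def by auto
  have "(\<Sum>r\<in>(\<lambda>(c, m). Link c m) ` Sigma K (\<lambda>c. c). f r) = (\<Sum>(c, m)\<in>Sigma K (\<lambda>c. c). f (Link c m))"
    by (subst sum.reindex) (auto simp: inj_on_def intro!: sum.cong)
  also have "\<dots> = (\<Sum>c\<in>K. \<Sum>m\<in>c. f (Link c m))"
    using assms unfolding star_system_def by (subst sum.Sigma) auto
  finally have links: "(\<Sum>r\<in>(\<lambda>(c, m). Link c m) ` Sigma K (\<lambda>c. c). f r) = (\<Sum>c\<in>K. \<Sum>m\<in>c. f (Link c m))" .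
  have "(\<Sum>r\<in>lin_rows V K. f r) = (\<Sum>r\<in>Lower ` V. f r) + (\<Sum>r\<in>Upper ` V. f r)
     + (\<Sum>r\<in>(\<lambda>(c, m). Link c m) ` Sigma K (\<lambda>c. c). f r) + (\<Sum>r\<in>AndRow ` K. f r)"
    unfolding lin_rows_eq using fin by (subst sum.union_disjoint, auto)+
  then show ?thesis
    unfolding links by (simp add: sum.reindex inj_on_def)
qed

lemma sum_mult_delta:
  fixes g :: "'a \<Rightarrow> real"
  assumes "finite S"
  shows "(\<Sum>s\<in>S. g s * (if x = s then a else 0)) = (if x \<in> S then g x * a else 0)"
proof -
  have "(\<Sum>s\<in>S. g s * (if x = s then a else 0)) = (\<Sum>s\<in>S. if x = s then g x * a else 0)"
    by (rule sum.cong) auto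
  then show ?thesis
    using assms by simp
qed

lemma lin_rows_column_sum:
  assumes "star_system V K" "x \<in> V"
  shows "(\<Sum>r\<in>lin_rows V K. u r * lin_A r x) = u (Upper x) - u (Lower x)
    + (\<Sum>c\<in>K. (if x = \<Union>c then (\<Sum>m\<in>c. u (Link c m)) - u (AndRow c) else 0)
      + (if x \<in> c then u (AndRow c) - u (Link c x) else 0))"
proof -
  have fin: "finite V" "\<And>c. c \<in> K \<Longrightarrow> finite c"
    using assms(1) unfolding star_system_def by auto
  have bounds: "(\<Sum>v\<in>V. u (Lower v) * lin_A (Lower v) x) = - u (Lower x)"
    "(\<Sum>v\<in>V. u (Upper v) * lin_A (Upper v) x) = u (Upper x)"
    using sum_mult_delta[OF fin(1), of "\<lambda>v. u (Lower v)" x "-1"]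
      sum_mult_delta[OF fin(1), of "\<lambda>v. u (Upper v)" x 1] assms(2) by simp_all
  have "(\<Sum>m\<in>c. u (Link c m) * lin_A (Link c m) x) + u (AndRow c) * lin_A (AndRow c) x
      = (if x = \<Union>c then (\<Sum>m\<in>c. u (Link c m)) - u (AndRow c) else 0)
        + (if x \<in> c then u (AndRow c) - u (Link c x) else 0)" if "c \<in> K" for c
  proof -
    have "(\<Sum>m\<in>c. u (Link c m) * lin_A (Link c m) x)
        = (if x = \<Union>c then (\<Sum>m\<in>c. u (Link c m)) else 0) - (if x \<in> c then u (Link c x) else 0)"
      using sum_mult_delta[OF fin(2)[OF that], of "\<lambda>m. u (Link c m)" x 1]
      by (simp add: right_diff_distrib sum_subtractf sum_distrib_left[symmetric] mult.commute)
    then show ?thesis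
      by simp
  qed
  then show ?thesis
    unfolding sum_lin_rows[OF assms(1)] bounds by (simp add: sum.distrib[symmetric])
qed

lemma lin_rows_objective:
  assumes "star_system V K"
  shows "(\<Sum>r\<in>lin_rows V K. lin_b r * u r)
    = (\<Sum>x\<in>V. u (Upper x)) + (\<Sum>c\<in>K. (real (card c) - 1) * u (AndRow c))"
  by (simp add: sum_lin_rows[OF assms])

lemma primal_feasible_lin_rowsI:
  assumes "star_system V K"
    and "\<forall>x\<in>V. 0 \<le> y x \<and> y x \<le> 1"
    and "\<forall>c\<in>K. \<forall>m\<in>c. y (\<Union>c) \<le> y m"
    and "\<forall>c\<in>K. (\<Sum>m\<in>c. y m) - y (\<Union>c) \<le> real (card c) - 1"
  shows "primal_feasible (lin_rows V K) V lin_A lin_b y"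
  unfolding primal_feasible_def
proof
  fix r assume r: "r \<in> lin_rows V K"
  have fin: "finite V" and sub: "\<And>c. c \<in> K \<Longrightarrow> c \<subseteq> V \<and> \<Union>c \<in> V"
    using assms(1) unfolding star_system_def star_def by auto
  have delta: "(\<Sum>x\<in>V. (if x = a then k else 0) * y x) = k * y a" if "a \<in> V" for a k
    using fin that by (simp add: if_distrib[of "\<lambda>t. t * _"] cong: if_cong)
  have indicator: "(\<Sum>x\<in>V. (if x \<in> c then 1 else 0) * y x) = (\<Sum>x\<in>c. y x)" if "c \<subseteq> V" for c
    using fin that by (simp add: if_distrib[of "\<lambda>t. t * _"] sum.inter_restrict[symmetric] Int_absorb1
        cong: if_cong)
  show "(\<Sum>x\<in>V. lin_A r x * y x) \<le> lin_b r"
  proof (cases r)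
    case (Lower m)
    with r have "m \<in> V"
      unfolding lin_rows_def by auto
    with Lower assms(2) delta[of m] show ?thesis
      by simp
  next
    case (Upper m)
    with r have "m \<in> V"
      unfolding lin_rows_def by auto
    with Upper assms(2) delta[of m] show ?thesis
      by simp
  next
    case (Link c m)
    with r have "c \<in> K" "m \<in> c"
      unfolding lin_rows_def by auto
    moreover from this have "m \<in> V"
      using sub by blast
    ultimately show ?thesis
      using Link assms(3) sub delta[of m] delta[of "\<Union>c"]
      by (auto simp: left_diff_distrib sum_subtractf)
  next
    case (AndRow c)
    with r have "c \<in> K"
      unfolding lin_rows_def by auto
    with AndRow assms(4) sub indicator[of c] delta[of "\<Union>c"] show ?thesis
      by (auto simp: left_diff_distrib sum_subtractf)
  qed
qed

section \<open>Stars\<close>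

lemma star_system_star: "finite c \<Longrightarrow> star_system (star c) {c}"
  unfolding star_system_def star_def by simp

lemma binary_strong_duality_no_and_constraints:
  assumes "finite V"
  shows "binary_strong_duality (lin_rows V {}) V lin_A lin_b"
  unfolding binary_strong_duality_def
proof
  fix w :: "nat set \<Rightarrow> int"
  have sys: "star_system V {}"
    using assms unfolding star_system_def by simp
  define y where "y x = (if w x > 0 then 1 else 0 :: real)" for x
  define u where "u r = (case r of Upper x \<Rightarrow> max (w x) 0 | Lower x \<Rightarrow> max (- w x) 0 | _ \<Rightarrow> 0)" for r
  have "duality_certificate (lin_rows V {}) V lin_A lin_b (\<lambda>x. of_int (w x)) y (\<lambda>r. of_int (u r))"
    unfolding duality_certificate_def dual_feasible_def
  proof (intro conjI ballI)
    show "primal_feasible (lin_rows V {}) V lin_A lin_b y"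
      by (rule primal_feasible_lin_rowsI[OF sys]) (auto simp: y_def)
    show "0 \<le> real_of_int (u r)" for r
      by (auto simp: u_def split: row.split)
    show "(\<Sum>r\<in>lin_rows V {}. of_int (u r) * lin_A r x) = of_int (w x)" if "x \<in> V" for x
      unfolding lin_rows_column_sum[OF sys that] by (simp add: u_def)
    show "(\<Sum>x\<in>V. of_int (w x) * y x) = (\<Sum>r\<in>lin_rows V {}. lin_b r * of_int (u r))"
      unfolding lin_rows_objective[OF sys] by (auto simp: u_def y_def intro!: sum.cong)
  qed
  moreover have "\<forall>x\<in>V. y x \<in> {0, 1}"
    by (simp add: y_def)
  ultimately show "binary_certified (lin_rows V {}) V lin_A lin_b w"
    unfolding binary_certified_def by (intro exI[of _ y] exI[of _ "\<lambda>r. of_int (u r)"]) auto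
qed

lemma star_column_sums:
  assumes "finite c" "\<Union>c \<notin> c"
  shows "(\<Sum>r\<in>lin_rows (star c) {c}. u r * lin_A r (\<Union>c))
      = u (Upper (\<Union>c)) - u (Lower (\<Union>c)) + (\<Sum>m\<in>c. u (Link c m)) - u (AndRow c)"
    and "m \<in> c \<Longrightarrow> (\<Sum>r\<in>lin_rows (star c) {c}. u r * lin_A r m)
      = u (Upper m) - u (Lower m) + u (AndRow c) - u (Link c m)"
proof -
  have sys: "star_system (star c) {c}"
    using assms(1) by (rule star_system_star)
  have centre: "\<Union>c \<in> star c"
    by (simp add: star_def)
  show "(\<Sum>r\<in>lin_rows (star c) {c}. u r * lin_A r (\<Union>c))
      = u (Upper (\<Union>c)) - u (Lower (\<Union>c)) + (\<Sum>m\<in>c. u (Link c m)) - u (AndRow c)"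
    unfolding lin_rows_column_sum[OF sys centre] using assms(2) by simp
  show "(\<Sum>r\<in>lin_rows (star c) {c}. u r * lin_A r m) = u (Upper m) - u (Lower m) + u (AndRow c) - u (Link c m)"
    if "m \<in> c"
  proof -
    have "m \<in> star c" "m \<noteq> \<Union>c"
      using that assms(2) unfolding star_def by auto
    then show ?thesis
      unfolding lin_rows_column_sum[OF sys \<open>m \<in> star c\<close>] using that by simp
  qed
qed

lemma primal_feasible_star:
  fixes y :: "nat set \<Rightarrow> int"
  assumes "finite c" "\<forall>x\<in>star c. y x \<in> {0, 1}" "\<forall>m\<in>c. y (\<Union>c) \<le> y m"
    and "(\<Sum>m\<in>c. y m) - y (\<Union>c) \<le> int (card c) - 1"
  shows "primal_feasible (lin_rows (star c) {c}) (star c) lin_A lin_b (\<lambda>x. of_int (y x))"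
proof (rule primal_feasible_lin_rowsI[OF star_system_star[OF assms(1)]])
  have "real_of_int ((\<Sum>m\<in>c. y m) - y (\<Union>c)) \<le> real_of_int (int (card c) - 1)"
    using assms(4) by (rule of_int_le_iff[THEN iffD2])
  then show "\<forall>d\<in>{c}. (\<Sum>m\<in>d. real_of_int (y m)) - real_of_int (y (\<Union>d)) \<le> real (card d) - 1"
    by simp
qed (use assms(2,3) in auto)

text \<open>\<open>U\<close>, \<open>L\<close>, \<open>Lk\<close> and \<open>a\<close> are the dual values of the rows \<^const>\<open>Upper\<close>, \<^const>\<open>Lower\<close>,
  \<^const>\<open>Link\<close> and \<^const>\<open>AndRow\<close>; \<open>centre\<close> and \<open>members\<close> are the dual equations.\<close>
lemma star_certificate:
  fixes w y U L Lk :: "nat set \<Rightarrow> int" and a :: int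
  assumes c: "finite c" "\<Union>c \<notin> c"
    and y: "\<forall>x\<in>star c. y x \<in> {0, 1}" "\<forall>m\<in>c. y (\<Union>c) \<le> y m"
      "(\<Sum>m\<in>c. y m) - y (\<Union>c) \<le> int (card c) - 1"
    and nonneg: "\<forall>x. 0 \<le> U x" "\<forall>x. 0 \<le> L x" "\<forall>x. 0 \<le> Lk x" "0 \<le> a"
    and centre: "U (\<Union>c) - L (\<Union>c) + (\<Sum>m\<in>c. Lk m) - a = w (\<Union>c)"
    and members: "\<forall>m\<in>c. U m - L m + a - Lk m = w m"
    and objective: "w (\<Union>c) * y (\<Union>c) + (\<Sum>m\<in>c. w m * y m) = U (\<Union>c) + (\<Sum>m\<in>c. U m) + (int (card c) - 1) * a"
  shows "binary_certified (lin_rows (star c) {c}) (star c) lin_A lin_b w"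
  unfolding binary_certified_def
proof (intro exI conjI)
  let ?y = "\<lambda>x. real_of_int (y x)"
  let ?u = "\<lambda>r. real_of_int (case r of Upper x \<Rightarrow> U x | Lower x \<Rightarrow> L x | Link _ m \<Rightarrow> Lk m | AndRow _ \<Rightarrow> a)"
  have sys: "star_system (star c) {c}"
    using c(1) by (rule star_system_star)
  show "\<forall>x\<in>star c. ?y x \<in> {0, 1}" "\<forall>r\<in>lin_rows (star c) {c}. ?u r \<in> \<int>"
    using y(1) by auto
  have "primal_feasible (lin_rows (star c) {c}) (star c) lin_A lin_b ?y"
    using c(1) y by (rule primal_feasible_star)
  moreover have "dual_feasible (lin_rows (star c) {c}) (star c) lin_A (\<lambda>x. of_int (w x)) ?u"
    unfolding dual_feasible_def
  proof (intro conjI ballI)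
    show "0 \<le> ?u r" for r
      using nonneg by (simp split: row.split)
    fix x assume "x \<in> star c"
    then consider "x = \<Union>c" | "x \<in> c"
      unfolding star_def by blast
    then show "(\<Sum>r\<in>lin_rows (star c) {c}. ?u r * lin_A r x) = of_int (w x)"
    proof cases
      case 1
      have "real_of_int (U (\<Union>c) - L (\<Union>c) + (\<Sum>m\<in>c. Lk m) - a) = of_int (w (\<Union>c))"
        using centre by simp
      with 1 show ?thesis
        by (simp add: star_column_sums(1)[OF c])
    next
      case 2
      then have "real_of_int (U x - L x + a - Lk x) = of_int (w x)"
        using members by simp
      with 2 show ?thesis
        by (simp add: star_column_sums(2)[OF c])
    qed
  qed
  moreover have "(\<Sum>x\<in>star c. of_int (w x) * ?y x) = (\<Sum>r\<in>lin_rows (star c) {c}. lin_b r * ?u r)"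
  proof -
    have "(\<Sum>r\<in>lin_rows (star c) {c}. lin_b r * ?u r) = (\<Sum>x\<in>star c. of_int (U x)) + (real (card c) - 1) * of_int a"
      by (subst lin_rows_objective[OF sys]) simp
    also have "\<dots> = of_int (U (\<Union>c) + (\<Sum>m\<in>c. U m) + (int (card c) - 1) * a)"
      using c unfolding star_def by simp
    also have "\<dots> = (\<Sum>x\<in>star c. of_int (w x) * ?y x)"
      using c unfolding objective[symmetric] star_def by simp
    finally show ?thesis ..
  qed
  ultimately show "duality_certificate (lin_rows (star c) {c}) (star c) lin_A lin_b (\<lambda>x. of_int (w x)) ?y ?u"
    unfolding duality_certificate_def by blast
qed

lemma sum_bounded_split:
  fixes f :: "'a \<Rightarrow> int"
  assumes "finite S" "\<forall>x\<in>S. 0 \<le> f x" "0 \<le> t" "t \<le> (\<Sum>x\<in>S. f x)"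
  shows "\<exists>g. (\<forall>x\<in>S. 0 \<le> g x \<and> g x \<le> f x) \<and> (\<Sum>x\<in>S. g x) = t"
  using assms
proof (induction S arbitrary: t rule: finite_induct)
  case empty
  then show ?case
    by simp
next
  case (insert x S)
  define s where "s = min t (f x)"
  have "\<forall>x\<in>S. 0 \<le> f x" "0 \<le> t - s" "t - s \<le> (\<Sum>x\<in>S. f x)"
    using insert.prems insert.hyps sum_nonneg[of S f] unfolding s_def by auto
  then obtain g where g: "\<forall>x\<in>S. 0 \<le> g x \<and> g x \<le> f x" "(\<Sum>x\<in>S. g x) = t - s"
    using insert.IH by blast
  have "(\<Sum>z\<in>S. (g(x := s)) z) = (\<Sum>z\<in>S. g z)"
    using insert.hyps by (intro sum.cong) auto
  then have "(\<Sum>z\<in>insert x S. (g(x := s)) z) = t"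
    using insert.hyps g(2) by simp
  moreover have "\<forall>z\<in>insert x S. 0 \<le> (g(x := s)) z \<and> (g(x := s)) z \<le> f z"
    using insert.prems g(1) unfolding s_def by auto
  ultimately show ?case
    by blast
qed

lemma sum_le_card_minus_one:
  fixes y :: "'a \<Rightarrow> int"
  assumes "finite c" "m\<^sub>0 \<in> c" "y m\<^sub>0 = 0" "\<forall>m\<in>c. y m \<le> 1"
  shows "(\<Sum>m\<in>c. y m) \<le> int (card c) - 1"
proof -
  have "(\<Sum>m\<in>c. y m) = (\<Sum>m\<in>c - {m\<^sub>0}. y m)"
    using assms(1-3) by (simp add: sum.remove)
  also have "\<dots> \<le> (\<Sum>m\<in>c - {m\<^sub>0}. 1)"
    using assms(4) by (intro sum_mono) simp
  also have "\<dots> = int (card c) - 1"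
  proof -
    have "0 < card c"
      using assms(1,2) card_gt_0_iff by blast
    then show ?thesis
      using assms(1,2) by (simp add: card_Diff_singleton of_nat_diff)
  qed
  finally show ?thesis .
qed

lemma star_certificate_heavy_centre:
  assumes fc: "finite c" and pc: "\<Union>c \<notin> c"
    and heavy: "(\<Sum>m\<in>c. max (- w m) 0) \<le> w (\<Union>c)"
  shows "binary_certified (lin_rows (star c) {c}) (star c) lin_A lin_b w"
proof -
  define U where "U x = (if x = \<Union>c then w (\<Union>c) - (\<Sum>m\<in>c. max (- w m) 0) else max (w x) 0)" for x
  have "(\<Sum>m\<in>c. U m) = (\<Sum>m\<in>c. max (w m) 0)"
    using pc unfolding U_def by (intro sum.cong) auto
  moreover have "(\<Sum>m\<in>c. w m) = (\<Sum>m\<in>c. max (w m) 0) - (\<Sum>m\<in>c. max (- w m) 0)"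
    by (simp add: sum_subtractf[symmetric]) (rule sum.cong, auto)
  ultimately have "w (\<Union>c) * 1 + (\<Sum>m\<in>c. w m * 1) = U (\<Union>c) + (\<Sum>m\<in>c. U m) + (int (card c) - 1) * 0"
    unfolding U_def by simp
  moreover have "\<forall>x. 0 \<le> U x"
    using heavy unfolding U_def by simp
  moreover have "U (\<Union>c) - 0 + (\<Sum>m\<in>c. max (- w m) 0) - 0 = w (\<Union>c)"
    and "\<forall>m\<in>c. U m - 0 + 0 - max (- w m) 0 = w m"
    using pc unfolding U_def by auto
  ultimately show ?thesis
    by (intro star_certificate[OF fc pc, where y = "\<lambda>_. 1" and U = U and L = "\<lambda>_. 0"
          and Lk = "\<lambda>m. max (- w m) 0" and a = 0]) (simp_all add: star_def)
qed

lemma star_certificate_nonpositive_member: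
  assumes fc: "finite c" and pc: "\<Union>c \<notin> c" and m\<^sub>0: "m\<^sub>0 \<in> c" "w m\<^sub>0 \<le> 0"
    and light: "w (\<Union>c) < (\<Sum>m\<in>c. max (- w m) 0)"
  shows "binary_certified (lin_rows (star c) {c}) (star c) lin_A lin_b w"
proof -
  \<comment> \<open>The links pay the positive part of the weight of the centre out of the negative members.\<close>
  obtain g where g: "\<forall>x\<in>c. 0 \<le> g x \<and> g x \<le> max (- w x) 0" "(\<Sum>x\<in>c. g x) = max (w (\<Union>c)) 0"
    using sum_bounded_split[OF fc, of "\<lambda>m. max (- w m) 0" "max (w (\<Union>c)) 0"] light
      sum_nonneg[of c "\<lambda>m. max (- w m) 0"] by auto
  define y where "y x = (if x = \<Union>c then 0 else if w x > 0 then 1 else 0 :: int)" for x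
  define U where "U x = (if x = \<Union>c then 0 else max (w x) 0)" for x
  define L where "L x = (if x = \<Union>c then max (- w x) 0 else if x \<in> c then max (- w x) 0 - g x else 0)" for x
  define Lk where "Lk x = (if x \<in> c then g x else 0)" for x
  have "(\<Sum>m\<in>c. U m) = (\<Sum>m\<in>c. max (w m) 0)" "(\<Sum>m\<in>c. w m * y m) = (\<Sum>m\<in>c. max (w m) 0)"
    using pc unfolding U_def y_def by (auto intro!: sum.cong)
  moreover have "(\<Sum>m\<in>c. Lk m) = max (w (\<Union>c)) 0"
    using g(2) unfolding Lk_def by simp
  ultimately have "w (\<Union>c) * y (\<Union>c) + (\<Sum>m\<in>c. w m * y m) = U (\<Union>c) + (\<Sum>m\<in>c. U m) + (int (card c) - 1) * 0"
    and "U (\<Union>c) - L (\<Union>c) + (\<Sum>m\<in>c. Lk m) - 0 = w (\<Union>c)"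
    unfolding U_def L_def y_def by simp_all
  moreover have "\<forall>m\<in>c. U m - L m + 0 - Lk m = w m"
    using pc unfolding U_def L_def Lk_def by auto
  moreover have "\<forall>x. 0 \<le> U x" "\<forall>x. 0 \<le> L x" "\<forall>x. 0 \<le> Lk x"
    using g(1) unfolding U_def L_def Lk_def by auto
  moreover have "(\<Sum>m\<in>c. y m) \<le> int (card c) - 1"
    by (rule sum_le_card_minus_one[OF fc m\<^sub>0(1)]) (use m\<^sub>0 pc in \<open>auto simp: y_def\<close>)
  moreover have "\<forall>x\<in>star c. y x \<in> {0, 1}" "\<forall>m\<in>c. y (\<Union>c) \<le> y m" "y (\<Union>c) = 0"
    unfolding y_def by auto
  ultimately show ?thesis
    by (intro star_certificate[OF fc pc, where y = y and U = U and L = L and Lk = Lk and a = 0])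
      simp_all
qed

lemma star_certificate_positive_members:
  assumes fc: "finite c" and pc: "\<Union>c \<notin> c" and ne: "c \<noteq> {}"
    and pos: "\<forall>m\<in>c. 0 < w m" and neg: "w (\<Union>c) < 0"
  shows "binary_certified (lin_rows (star c) {c}) (star c) lin_A lin_b w"
proof -
  obtain m\<^sub>0 where m\<^sub>0: "m\<^sub>0 \<in> c" and min: "\<forall>m\<in>c. w m\<^sub>0 \<le> w m"
    using arg_min_if_finite[OF fc ne, of w] by (meson not_le)
  define a where "a = min (w m\<^sub>0) (- w (\<Union>c))"
  define U where "U x = (if x \<in> c then w x - a else 0)" for x
  define L where "L x = (if x = \<Union>c then - w x - a else 0)" for x
  have sum_U: "(\<Sum>m\<in>c. U m) = (\<Sum>m\<in>c. w m) - int (card c) * a"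
    unfolding U_def by (simp add: sum_subtractf)
  have nonneg: "\<forall>x. 0 \<le> U x" "\<forall>x. 0 \<le> L x" "0 \<le> a"
    using m\<^sub>0(1) min pos neg unfolding U_def L_def a_def by auto
  have centre: "U (\<Union>c) - L (\<Union>c) + (\<Sum>m\<in>c. 0) - a = w (\<Union>c)"
    and members: "\<forall>m\<in>c. U m - L m + a - 0 = w m"
    using pc unfolding U_def L_def by auto
  consider "- w (\<Union>c) \<le> w m\<^sub>0" | "w m\<^sub>0 < - w (\<Union>c)"
    by linarith
  then show ?thesis
  proof cases
    case 1
    then have "w (\<Union>c) * 1 + (\<Sum>m\<in>c. w m * 1) = U (\<Union>c) + (\<Sum>m\<in>c. U m) + (int (card c) - 1) * a"
      using pc unfolding sum_U by (simp add: U_def a_def algebra_simps)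
    then show ?thesis
      using nonneg centre members
      by (intro star_certificate[OF fc pc, where y = "\<lambda>_. 1" and U = U and L = L and Lk = "\<lambda>_. 0"
            and a = a]) (simp_all add: star_def)
  next
    case 2
    define y where "y x = (if x = \<Union>c \<or> x = m\<^sub>0 then 0 else 1 :: int)" for x
    have "(\<Sum>m\<in>c. w m * y m) = (\<Sum>m\<in>c - {m\<^sub>0}. w m * y m)"
      using fc m\<^sub>0(1) by (simp add: sum.remove y_def)
    also have "\<dots> = (\<Sum>m\<in>c - {m\<^sub>0}. w m)"
      using pc by (intro sum.cong) (auto simp: y_def)
    also have "\<dots> = (\<Sum>m\<in>c. w m) - w m\<^sub>0"
      using fc m\<^sub>0(1) by (simp add: sum_diff1)
    finally have "w (\<Union>c) * y (\<Union>c) + (\<Sum>m\<in>c. w m * y m) = U (\<Union>c) + (\<Sum>m\<in>c. U m) + (int (card c) - 1) * a"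
      using 2 pc unfolding sum_U by (simp add: U_def a_def y_def algebra_simps)
    moreover have "(\<Sum>m\<in>c. y m) \<le> int (card c) - 1"
      by (rule sum_le_card_minus_one[OF fc m\<^sub>0(1)]) (auto simp: y_def)
    ultimately show ?thesis
      using nonneg centre members pc
      by (intro star_certificate[OF fc pc, where y = y and U = U and L = L and Lk = "\<lambda>_. 0" and a = a])
        (auto simp: star_def y_def)
  qed
qed

lemma binary_strong_duality_star:
  assumes "finite c" "\<Union>c \<notin> c" "c \<noteq> {}"
  shows "binary_strong_duality (lin_rows (star c) {c}) (star c) lin_A lin_b"
  unfolding binary_strong_duality_def
proof
  fix w :: "nat set \<Rightarrow> int"
  consider "(\<Sum>m\<in>c. max (- w m) 0) \<le> w (\<Union>c)"
    | m\<^sub>0 where "w (\<Union>c) < (\<Sum>m\<in>c. max (- w m) 0)" "m\<^sub>0 \<in> c" "w m\<^sub>0 \<le> 0"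
    | "w (\<Union>c) < 0" "\<forall>m\<in>c. 0 < w m"
  proof (cases "(\<Sum>m\<in>c. max (- w m) 0) \<le> w (\<Union>c)")
    case light: False
    show ?thesis
    proof (cases "\<exists>m\<in>c. w m \<le> 0")
      case False
      then have "(\<Sum>m\<in>c. max (- w m) 0) = 0"
        by (intro sum.neutral) auto
      with light False that(3) show ?thesis
        by force
    qed (use light that(2) in force)
  qed (rule that(1))
  then show "binary_certified (lin_rows (star c) {c}) (star c) lin_A lin_b w"
  proof cases
    case 1
    then show ?thesis
      by (rule star_certificate_heavy_centre[OF assms(1,2)])
  next
    case (2 m\<^sub>0)
    then show ?thesis
      by (intro star_certificate_nonpositive_member[OF assms(1,2), of m\<^sub>0]) simp_all
  next
    case 3
    then show ?thesis
      by (intro star_certificate_positive_members[OF assms]) simp_all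
  qed
qed

section \<open>Longest paths in acyclic graphs\<close>

definition graph_path :: "'a set \<Rightarrow> 'a set set \<Rightarrow> 'a list \<Rightarrow> bool" where
  "graph_path V E xs \<longleftrightarrow> distinct xs \<and> set xs \<subseteq> V \<and> successively (\<lambda>x y. {x, y} \<in> E) xs"

lemma graph_path_closed_is_cycle:
  assumes "graph_path V E xs" "3 \<le> length xs" "{last xs, hd xs} \<in> E"
  shows "is_cycle V E xs"
  unfolding is_cycle_def
proof (intro conjI allI impI)
  show "3 \<le> length xs" "distinct xs" "set xs \<subseteq> V"
    using assms unfolding graph_path_def by auto
  fix i assume i: "i < length xs"
  show "{xs ! i, xs ! ((i + 1) mod length xs)} \<in> E"
  proof (cases "Suc i < length xs")
    case True
    then show ?thesis
      using assms(1) successively_nth unfolding graph_path_def by fastforce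
  next
    case False
    then have "i = length xs - 1" and ne: "xs \<noteq> []"
      using i by auto
    then have "xs ! i = last xs" "(i + 1) mod length xs = 0"
      by (simp_all add: last_conv_nth)
    moreover have "xs ! 0 = hd xs"
      using ne by (simp add: hd_conv_nth)
    ultimately show ?thesis
      using assms(3) by simp
  qed
qed

lemma longest_graph_path_exists:
  assumes "finite V" "graph_path V E xs\<^sub>0"
  obtains xs where "graph_path V E xs" "length xs\<^sub>0 \<le> length xs"
    "\<And>ys. graph_path V E ys \<Longrightarrow> length ys \<le> length xs"
proof -
  have "length ys < Suc (card V)" if "graph_path V E ys" for ys
    using that assms(1) distinct_card[of ys] card_mono[of V "set ys"] unfolding graph_path_def by simp
  then obtain xs where "graph_path V E xs" "\<forall>ys. graph_path V E ys \<longrightarrow> length ys \<le> length xs"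
    using ex_has_greatest_nat[of "graph_path V E" xs\<^sub>0 length] assms(2) by blast
  with assms(2) show thesis
    using that by blast
qed

lemma graph_path_appendD:
  assumes "graph_path V E (xs @ ys)"
  shows "graph_path V E xs" "graph_path V E ys"
  using assms unfolding graph_path_def by (auto simp: successively_append_iff)

lemma graph_path_infixD: "graph_path V E (xs @ ys @ zs) \<Longrightarrow> graph_path V E ys"
  by (metis graph_path_appendD)

lemma acyclic_graph_no_closed_path:
  assumes "acyclic_graph V E" "graph_path V E xs" "3 \<le> length xs" "{last xs, hd xs} \<in> E"
  shows False
  using graph_path_closed_is_cycle[OF assms(2-4)] assms(1) unfolding acyclic_graph_def by blast

context
  fixes V :: "'a set" and E :: "'a set set" and x\<^sub>0 x\<^sub>1 :: 'a and rest :: "'a list"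
  assumes acyclic: "acyclic_graph V E"
    and edge: "\<And>x y. {x, y} \<in> E \<Longrightarrow> x \<noteq> y \<and> x \<in> V \<and> y \<in> V"
    and path: "graph_path V E (x\<^sub>0 # x\<^sub>1 # rest)"
    and longest: "\<And>ys. graph_path V E ys \<Longrightarrow> length ys \<le> length (x\<^sub>0 # x\<^sub>1 # rest)"
begin

lemma longest_graph_path_start_is_leaf:
  assumes "{x\<^sub>0, y} \<in> E"
  shows "y = x\<^sub>1"
proof (rule ccontr)
  assume "y \<noteq> x\<^sub>1"
  moreover have "y \<noteq> x\<^sub>0" "y \<in> V"
    using edge[OF assms] by auto
  ultimately show False
  proof (cases "y \<in> set rest")
    case True
    then obtain as bs where rest: "rest = as @ y # bs"
      by (meson split_list)
    have "graph_path V E (x\<^sub>0 # x\<^sub>1 # as @ [y])"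
      using graph_path_appendD(1)[of V E "x\<^sub>0 # x\<^sub>1 # as @ [y]" bs] path unfolding rest by simp
    then show False
      by (rule acyclic_graph_no_closed_path[OF acyclic]) (use assms in \<open>auto simp: insert_commute\<close>)
  next
    case False
    with \<open>y \<noteq> x\<^sub>0\<close> \<open>y \<noteq> x\<^sub>1\<close> \<open>y \<in> V\<close> have "graph_path V E (y # x\<^sub>0 # x\<^sub>1 # rest)"
      using path assms unfolding graph_path_def by (auto simp: insert_commute)
    then show False
      using longest by fastforce
  qed
qed

lemma longest_graph_path_second_vertex:
  assumes "{x\<^sub>1, y} \<in> E" "{y, z} \<in> E"
  shows "z = x\<^sub>1 \<or> y = hd rest"
proof (rule ccontr)
  assume contra: "\<not> (z = x\<^sub>1 \<or> y = hd rest)"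
  have y: "y \<noteq> x\<^sub>1" "y \<in> V" "y \<noteq> z" "z \<in> V"
    using edge[OF assms(1)] edge[OF assms(2)] by auto
  have "y \<noteq> x\<^sub>0"
    using longest_graph_path_start_is_leaf[of z] assms(2) contra by auto
  show False
  proof (cases "y \<in> set rest")
    case True
    then obtain as bs where rest: "rest = as @ y # bs"
      by (meson split_list)
    then have "as \<noteq> []"
      using contra by auto
    have "graph_path V E (x\<^sub>1 # as @ [y])"
      using graph_path_infixD[of V E "[x\<^sub>0]" "x\<^sub>1 # as @ [y]" bs] path unfolding rest by simp
    then show False
      by (rule acyclic_graph_no_closed_path[OF acyclic]) (use assms \<open>as \<noteq> []\<close> in \<open>auto simp: insert_commute Suc_le_eq\<close>)
  next
    case y_out: False
    show False
    proof (cases "z \<in> set rest")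
      case True
      then obtain as bs where rest: "rest = as @ z # bs"
        by (meson split_list)
      have "graph_path V E (x\<^sub>1 # as @ [z])"
        using graph_path_infixD[of V E "[x\<^sub>0]" "x\<^sub>1 # as @ [z]" bs] path unfolding rest by simp
      then have "graph_path V E (y # x\<^sub>1 # as @ [z])"
        using y y_out assms(1) unfolding graph_path_def rest by (auto simp: insert_commute)
      then show False
        by (rule acyclic_graph_no_closed_path[OF acyclic]) (use assms(2) in \<open>auto simp: insert_commute\<close>)
    next
      case False
      moreover have "z \<noteq> x\<^sub>0"
        using longest_graph_path_start_is_leaf[of y] assms(2) y by (auto simp: insert_commute)
      ultimately have "graph_path V E (z # y # x\<^sub>1 # rest)"
        using path y y_out \<open>y \<noteq> x\<^sub>0\<close> contra assms unfolding graph_path_def by (auto simp: insert_commute)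
      then show False
        using longest by fastforce
    qed
  qed
qed

end

lemma acyclic_graph_peripheral_leaf:
  assumes "finite V" "acyclic_graph V E" "\<And>x y. {x, y} \<in> E \<Longrightarrow> x \<noteq> y \<and> x \<in> V \<and> y \<in> V"
    and "{a, b} \<in> E"
  obtains x\<^sub>0 x\<^sub>1 p where "{x\<^sub>0, x\<^sub>1} \<in> E" "\<And>y. {x\<^sub>0, y} \<in> E \<Longrightarrow> y = x\<^sub>1"
    "\<And>y z. {x\<^sub>1, y} \<in> E \<Longrightarrow> {y, z} \<in> E \<Longrightarrow> z = x\<^sub>1 \<or> y = p"
proof -
  have "graph_path V E [a, b]"
    using assms(3,4) unfolding graph_path_def by auto
  then obtain xs where xs: "graph_path V E xs" "length [a, b] \<le> length xs"
    and longest: "\<And>ys. graph_path V E ys \<Longrightarrow> length ys \<le> length xs"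
    using longest_graph_path_exists[OF assms(1)] by blast
  then obtain x\<^sub>0 x\<^sub>1 rest where xs_eq: "xs = x\<^sub>0 # x\<^sub>1 # rest"
    by (cases xs rule: remdups_adj.cases) auto
  show thesis
  proof (rule that)
    show "{x\<^sub>0, x\<^sub>1} \<in> E"
      using xs(1) unfolding xs_eq graph_path_def by simp
    show "y = x\<^sub>1" if "{x\<^sub>0, y} \<in> E" for y
      by (rule longest_graph_path_start_is_leaf[where rest = rest])
        (use assms(2,3) xs(1) longest that in \<open>simp_all add: xs_eq\<close>)
    show "z = x\<^sub>1 \<or> y = hd rest" if "{x\<^sub>1, y} \<in> E" "{y, z} \<in> E" for y z
      by (rule longest_graph_path_second_vertex[where x\<^sub>0 = x\<^sub>0])
        (use assms(2,3) xs(1) longest that in \<open>simp_all add: xs_eq\<close>)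
  qed
qed

section \<open>Graded families of stars\<close>

text \<open>The properties of a simple linearization used below: resultants are distinct and strictly larger
  than their members.\<close>
definition graded_stars :: "nat set set \<Rightarrow> nat set set set \<Rightarrow> bool" where
  "graded_stars M C \<longleftrightarrow> finite M \<and> inj_on Union C \<and>
     (\<forall>c\<in>C. c \<noteq> {} \<and> star c \<subseteq> M \<and> (\<forall>m\<in>c. card m < card (\<Union>c)))"

lemma graded_starsD:
  assumes "graded_stars M C" "c \<in> C"
  shows "c \<noteq> {}" "star c \<subseteq> M" "\<And>m. m \<in> c \<Longrightarrow> card m < card (\<Union>c)" "\<Union>c \<notin> c" "finite c"
proof -
  show "c \<noteq> {}" "star c \<subseteq> M" and card: "\<And>m. m \<in> c \<Longrightarrow> card m < card (\<Union>c)"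
    using assms unfolding graded_stars_def by auto
  then show "\<Union>c \<notin> c"
    by blast
  have "c \<subseteq> M" "finite M"
    using assms \<open>star c \<subseteq> M\<close> unfolding graded_stars_def star_def by auto
  then show "finite c"
    by (rule finite_subset)
qed

lemma graded_stars_star_system:
  assumes "graded_stars M C"
  shows "star_system M C"
proof -
  have "finite M"
    using assms unfolding graded_stars_def by simp
  moreover have "C \<subseteq> Pow M"
    using graded_starsD(2)[OF assms] unfolding star_def by blast
  ultimately show ?thesis
    using graded_starsD(2,5)[OF assms] finite_subset[of C "Pow M"] unfolding star_system_def by auto
qed

lemma graded_stars_other_member:
  assumes "graded_stars M C" "c \<in> C"
  obtains m where "m \<in> c" "m \<noteq> x"
proof -
  have "c \<noteq> {x}"
    using graded_starsD(4)[OF assms] by auto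
  then show thesis
    using graded_starsD(1)[OF assms] that by blast
qed

lemma G_edges_iff: "{x, y} \<in> G_edges K \<longleftrightarrow> (\<exists>c\<in>K. x = \<Union>c \<and> y \<in> c \<or> y = \<Union>c \<and> x \<in> c)"
  unfolding G_edges_def D_arcs_def by (auto simp: doubleton_eq_iff)

lemma acyclic_graph_mono:
  assumes "acyclic_graph V E" "E' \<subseteq> E"
  shows "acyclic_graph V E'"
proof -
  have "is_cycle V E vs" if "is_cycle V E' vs" for vs
    using that assms(2) unfolding is_cycle_def by auto
  then show ?thesis
    using assms(1) unfolding acyclic_graph_def by blast
qed

lemma G_edges_mono: "K \<subseteq> C \<Longrightarrow> G_edges K \<subseteq> G_edges C"
  unfolding G_edges_def D_arcs_def by auto

lemma star_meets_other_stars_in_one_vertex: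
  assumes graded: "graded_stars M C" and KC: "K \<subseteq> C" and c: "c \<in> K" "d \<in> K" "d \<noteq> c"
    and near: "\<And>y z. {\<Union>c, y} \<in> G_edges K \<Longrightarrow> {y, z} \<in> G_edges K \<Longrightarrow> z = \<Union>c \<or> y = p"
  shows "star c \<inter> star d \<subseteq> {if p \<in> c then p else \<Union>c}"
proof
  have C: "c \<in> C" "d \<in> C"
    using KC c by auto
  have centres: "\<Union>d \<noteq> \<Union>c"
    using graded C c(3) unfolding graded_stars_def inj_on_def by blast
  have edge_d: "{\<Union>d, m} \<in> G_edges K" if "m \<in> d" for m
    using c(2) that unfolding G_edges_iff by blast
  fix a assume a: "a \<in> star c \<inter> star d"
  show "a \<in> {if p \<in> c then p else \<Union>c}"
  proof (cases "a = \<Union>c")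
    case True
    then have "a \<in> d" "{\<Union>c, \<Union>d} \<in> G_edges K"
      using a centres edge_d unfolding star_def by (auto simp: insert_commute)
    moreover obtain m where "m \<in> d" "m \<noteq> \<Union>c"
      using graded_stars_other_member[OF graded C(2)] by blast
    ultimately have "\<Union>d = p"
      using near edge_d by blast
    moreover have "\<Union>d \<notin> c"
      using graded_starsD(3)[OF graded C(1)] graded_starsD(3)[OF graded C(2)] \<open>a \<in> d\<close> True by fastforce
    ultimately show ?thesis
      using True by simp
  next
    case False
    then have "a \<in> c"
      using a unfolding star_def by blast
    then have centre_a: "{\<Union>c, a} \<in> G_edges K"
      using c(1) unfolding G_edges_iff by blast
    have "a = p"
    proof (cases "a = \<Union>d")
      case True
      obtain m where "m \<in> d" "m \<noteq> \<Union>c"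
        using graded_stars_other_member[OF graded C(2)] by blast
      then show ?thesis
        using near[OF centre_a] edge_d True by blast
    next
      case False
      then have "{a, \<Union>d} \<in> G_edges K"
        using a edge_d unfolding star_def by (auto simp: insert_commute)
      then show ?thesis
        using near[OF centre_a] centres by blast
    qed
    then show ?thesis
      using \<open>a \<in> c\<close> by simp
  qed
qed

lemma G_edges_graded_stars:
  assumes "graded_stars M C" "K \<subseteq> C" "{x, y} \<in> G_edges K"
  shows "x \<noteq> y" "x \<in> M" "y \<in> M"
proof -
  obtain c where "c \<in> K" "x = \<Union>c \<and> y \<in> c \<or> y = \<Union>c \<and> x \<in> c"
    using assms(3) unfolding G_edges_iff by blast
  moreover from this have "star c \<subseteq> M" "\<Union>c \<notin> c"
    using assms(2) graded_starsD(2,4)[OF assms(1)] by auto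
  ultimately show "x \<noteq> y" "x \<in> M" "y \<in> M"
    unfolding star_def by auto
qed

lemma G_edges_graded_stars_leaf:
  assumes graded: "graded_stars M C" and "K \<subseteq> C" "{x\<^sub>0, x\<^sub>1} \<in> G_edges K"
    and leaf: "\<And>y. {x\<^sub>0, y} \<in> G_edges K \<Longrightarrow> y = x\<^sub>1"
  obtains c where "c \<in> K" "x\<^sub>1 = \<Union>c"
proof -
  obtain c where c: "c \<in> K" "x\<^sub>0 = \<Union>c \<and> x\<^sub>1 \<in> c \<or> x\<^sub>1 = \<Union>c \<and> x\<^sub>0 \<in> c"
    using assms(3) unfolding G_edges_iff by blast
  \<comment> \<open>Every star has at least two members, so the leaf \<open>x\<^sub>0\<close> is not a centre.\<close>
  obtain m where "m \<in> c" "m \<noteq> x\<^sub>1"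
    using graded_stars_other_member[OF graded] assms(2) c(1) by blast
  with c leaf have "x\<^sub>1 = \<Union>c"
    unfolding G_edges_iff by blast
  with c(1) show thesis
    by (rule that)
qed

lemma graded_stars_leaf_star:
  assumes graded: "graded_stars M C" and acyclic: "acyclic_graph M (G_edges C)"
    and KC: "K \<subseteq> C" and "K \<noteq> {}"
  obtains c v where "c \<in> K" "v \<in> star c" "\<And>d. d \<in> K \<Longrightarrow> d \<noteq> c \<Longrightarrow> star c \<inter> star d \<subseteq> {v}"
proof -
  have edge: "x \<noteq> y \<and> x \<in> M \<and> y \<in> M" if "{x, y} \<in> G_edges K" for x y
    using G_edges_graded_stars[OF graded KC that] by blast
  obtain c\<^sub>0 m\<^sub>0 where "c\<^sub>0 \<in> K" "m\<^sub>0 \<in> c\<^sub>0"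
    using \<open>K \<noteq> {}\<close> KC graded_starsD(1)[OF graded] by blast
  then have some_edge: "{\<Union>c\<^sub>0, m\<^sub>0} \<in> G_edges K"
    unfolding G_edges_iff by blast
  have "acyclic_graph M (G_edges K)"
    using acyclic G_edges_mono[OF KC] by (rule acyclic_graph_mono)
  moreover have "finite M"
    using graded unfolding graded_stars_def by simp
  ultimately obtain x\<^sub>0 x\<^sub>1 p where x\<^sub>0\<^sub>1: "{x\<^sub>0, x\<^sub>1} \<in> G_edges K"
    and leaf: "\<And>y. {x\<^sub>0, y} \<in> G_edges K \<Longrightarrow> y = x\<^sub>1"
    and near: "\<And>y z. {x\<^sub>1, y} \<in> G_edges K \<Longrightarrow> {y, z} \<in> G_edges K \<Longrightarrow> z = x\<^sub>1 \<or> y = p"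
    using acyclic_graph_peripheral_leaf[of M "G_edges K", OF _ _ edge some_edge] by blast
  obtain c where c: "c \<in> K" "x\<^sub>1 = \<Union>c"
    using G_edges_graded_stars_leaf[OF graded KC x\<^sub>0\<^sub>1 leaf] by blast
  show thesis
  proof (rule that)
    show "c \<in> K" "(if p \<in> c then p else \<Union>c) \<in> star c"
      using c unfolding star_def by auto
    show "star c \<inter> star d \<subseteq> {if p \<in> c then p else \<Union>c}" if "d \<in> K" "d \<noteq> c" for d
      using star_meets_other_stars_in_one_vertex[OF graded KC c(1) that, of p] near
      unfolding c(2) by blast
  qed
qed

lemma binary_strong_duality_attach_star:
  assumes c: "finite c" "\<Union>c \<notin> c" "c \<noteq> {}"
    and sys: "star_system V K" and meet: "star c \<inter> V = {v}"
    and bsd: "binary_strong_duality (lin_rows V K) V lin_A lin_b"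
  shows "binary_strong_duality (lin_rows (star c \<union> V) (insert c K)) (star c \<union> V) lin_A lin_b"
proof -
  have sys_c: "star_system (star c) {c}"
    using c(1) by (rule star_system_star)
  have "card c \<noteq> 0"
    using c(1,3) by simp
  then have "primal_feasible (lin_rows (star c) {c}) (star c) lin_A lin_b (\<lambda>_. t)" if "t \<in> {0, 1}" for t
    using that by (intro primal_feasible_lin_rowsI[OF sys_c]) auto
  then have "binary_strong_duality (lin_rows (star c) {c} \<union> lin_rows V K) (star c \<union> V) lin_A lin_b"
    using sys_c sys lin_A_outside[OF sys_c] lin_A_outside[OF sys] binary_strong_duality_star[OF c] bsd
    by (intro binary_strong_duality_glue[OF finite_lin_rows[OF sys_c] finite_lin_rows[OF sys] _ _ meet])
      (auto simp: star_system_def)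
  then show ?thesis
    using lin_rows_Un[of "star c" V "{c}" K] by simp
qed

lemma binary_strong_duality_graded_stars:
  assumes graded: "graded_stars M C" and acyclic: "acyclic_graph M (G_edges C)"
    and "K \<subseteq> C" "finite V" "\<forall>c\<in>K. star c \<subseteq> V"
  shows "binary_strong_duality (lin_rows V K) V lin_A lin_b"
proof -
  have "finite C"
    using graded_stars_star_system[OF graded] unfolding star_system_def by simp
  then have "finite K"
    using assms(3) by (rule finite_subset[rotated])
  then show ?thesis
    using assms(3-5)
  proof (induction K arbitrary: V rule: finite_psubset_induct)
    case (psubset K)
    show ?case
    proof (cases "K = {}")
      case True
      then show ?thesis
        using binary_strong_duality_no_and_constraints[OF psubset.prems(2)] by simp
    next
      case False
      then obtain c v where c: "c \<in> K" "v \<in> star c" and meet: "\<And>d. d \<in> K \<Longrightarrow> d \<noteq> c \<Longrightarrow> star c \<inter> star d \<subseteq> {v}"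
        using graded_stars_leaf_star[OF graded acyclic psubset.prems(1)] by blast
      define V' where "V' = V - (star c - {v})"
      have stars': "\<forall>d\<in>K - {c}. star d \<subseteq> V'"
        using meet psubset.prems(3) unfolding V'_def by blast
      have "binary_strong_duality (lin_rows V' (K - {c})) V' lin_A lin_b"
        using psubset c(1) stars' unfolding V'_def by (intro psubset.IH) auto
      moreover have "star_system V' (K - {c})"
        using psubset.hyps psubset.prems stars' graded_starsD(5)[OF graded] unfolding star_system_def V'_def
        by auto
      moreover have "star c \<inter> V' = {v}" "star c \<union> V' = V" "insert c (K - {c}) = K"
        using c psubset.prems(3) unfolding V'_def by auto
      ultimately show ?thesis
        using binary_strong_duality_attach_star[of c V' "K - {c}" v] graded_starsD(1,4,5)[OF graded] c(1)
          psubset.prems(1) by auto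
    qed
  qed
qed

lemma simple_linearization_finite:
  assumes "simple_linearization n M C"
  shows "finite M" "finite C"
proof -
  have "M \<subseteq> Pow {1..n}" "C \<subseteq> Pow M"
    using assms unfolding simple_linearization_def linearization_def monomial_def by auto
  then show "finite M" "finite C"
    by (auto intro: finite_subset)
qed

lemma simple_linearization_same_resultant:
  assumes "simple_linearization n M C" "c\<^sub>1 \<in> C" "c\<^sub>2 \<in> C" "\<Union>c\<^sub>1 \<in> proper_monomials n M"
    and "\<Union>c\<^sub>1 = \<Union>c\<^sub>2"
  shows "c\<^sub>1 = c\<^sub>2"
proof -
  have "\<forall>m\<in>proper_monomials n M. \<exists>!c. c \<in> C \<and> \<Union>c = m"
    using assms(1) unfolding simple_linearization_def by simp
  then have "\<exists>!c. c \<in> C \<and> \<Union>c = \<Union>c\<^sub>1"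
    using assms(4) by (rule bspec)
  then show ?thesis
    using assms(2,3,5) by (auto elim: alt_ex1E)
qed

text \<open>There are as many constraints as proper monomials, each the resultant of exactly one of them.\<close>
lemma simple_linearization_resultant_proper:
  assumes "simple_linearization n M C" "c \<in> C"
  shows "\<Union>c \<in> proper_monomials n M"
proof -
  let ?P = "proper_monomials n M" and ?C' = "{c\<in>C. \<Union>c \<in> proper_monomials n M}"
  have "inj_on Union ?C'"
    using simple_linearization_same_resultant[OF assms(1)] unfolding inj_on_def by blast
  then have "card ?C' = card (Union ` ?C')"
    by (simp add: card_image)
  also have "Union ` ?C' = ?P"
  proof -
    have "\<forall>m\<in>?P. \<exists>c\<in>C. \<Union>c = m \<and> (\<forall>m'\<in>c. card m' < card m)"
      using assms(1) unfolding simple_linearization_def linearization_def by simp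
    then show ?thesis
      by (auto simp: image_iff) (metis (mono_tags, lifting))
  qed
  also have "card ?P = card C"
    using assms(1) unfolding simple_linearization_def by simp
  finally have "?C' = C"
    using simple_linearization_finite(2)[OF assms(1)] by (intro card_subset_eq) auto
  then show ?thesis
    using assms(2) by blast
qed

lemma simple_linearization_graded_stars:
  assumes "simple_linearization n M C"
  shows "graded_stars M C"
proof -
  let ?P = "proper_monomials n M"
  have mono: "\<forall>m\<in>M. monomial n m" and C: "\<forall>c\<in>C. c \<subseteq> M \<and> \<Union>c \<in> M"
    and consistent: "\<forall>m\<in>?P. \<exists>c\<in>C. \<Union>c = m \<and> (\<forall>m'\<in>c. card m' < card m)"
    using assms unfolding simple_linearization_def linearization_def by auto
  note proper = simple_linearization_resultant_proper[OF assms]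
  note same = simple_linearization_same_resultant[OF assms]
  have smaller: "card m < card (\<Union>c)" if cm: "c \<in> C" "m \<in> c" for c m
  proof -
    obtain c' where "c' \<in> C" "\<Union>c' = \<Union>c" "\<forall>m'\<in>c'. card m' < card (\<Union>c)"
      using bspec[OF consistent proper[OF cm(1)]] by blast
    with same[of c' c] proper cm show ?thesis
      by auto
  qed
  have "c \<noteq> {}" if "c \<in> C" for c
    using that C mono unfolding monomial_def by fastforce
  then show ?thesis
    unfolding graded_stars_def star_def inj_on_def
    using simple_linearization_finite(1)[OF assms] C smaller same proper by auto
qed

theorem lemma3p10:
  fixes n :: nat and M :: "nat set set" and C :: "nat set set set"
  assumes "simple_linearization n M C"
    and "acyclic_graph M (G_edges C)"
  shows "TDI (lin_rows M C) M lin_A lin_b"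
proof -
  have graded: "graded_stars M C"
    using assms(1) by (rule simple_linearization_graded_stars)
  then have sys: "star_system M C"
    by (rule graded_stars_star_system)
  then have "binary_strong_duality (lin_rows M C) M lin_A lin_b"
    unfolding star_system_def by (intro binary_strong_duality_graded_stars[OF graded assms(2)]) auto
  then show ?thesis
    using sys unfolding star_system_def by (intro TDI_if_binary_strong_duality finite_lin_rows[OF sys]) auto
qed

end
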